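(* Let $A,B,C,D\in\mathcal M_n$ be accretive with $\Re A\le\Re C$, $\Re B\le\Re D$, and $W(A),W(B)\subset S_\alpha$ for some $0\le\alpha<\pi/2$. Then for every $f\in\mathfrak m$, $$\Re(A\sigma_fB)\le\sec^2(\alpha)\,\Re(C\sigma_fD).$$
   Context: A matrix $A$ is accretive if $\Re A=\frac{A+A^*}{2}$ is positive definite. $W(A)$ is the numerical range, $S_\alpha=\{z:\Re z>0,\ |\Im z|\le\tan(\alpha)\Re z\}$. $\le$ is the Löwner order. $\mathfrak m$ is the set of matrix monotone $f:(0,\infty)\to(0,\infty)$ with $f(1)=1$; each has a unique probability measure $\nu_f$ on $[0,1]$ with $f(x)=\int_0^1((1-t)+tx^{-1})^{-1}d\nu_f(t)$, $x>0$. For accretive $A,B$: $A!_tB=((1-t)A^{-1}+tB^{-1})^{-1}$ and $A\sigma_fB:=\int_0^1A!_tB\,d\nu_f(t)$. *)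

theory Defs
  imports "HOL-Analysis.Analysis" "HOL-Probability.Probability_Measure"
begin

definition adj :: "complex^'n^'n \<Rightarrow> complex^'n^'n" where
  "adj A = (\<chi> i j. cnj (A $ j $ i))"

definition hermitian :: "complex^'n^'n \<Rightarrow> bool" where
  "hermitian A \<longleftrightarrow> adj A = A"

definition qform :: "complex^'n^'n \<Rightarrow> complex^'n \<Rightarrow> complex" where
  "qform A x = (\<Sum>i\<in>UNIV. cnj (x $ i) * ((A *v x) $ i))"

definition re_part :: "complex^'n^'n \<Rightarrow> complex^'n^'n" where
  "re_part A = (1/2 :: real) *\<^sub>R (A + adj A)"

definition pos_def :: "complex^'n^'n \<Rightarrow> bool" where
  "pos_def H \<longleftrightarrow> hermitian H \<and> (\<forall>x. x \<noteq> 0 \<longrightarrow> 0 < Re (qform H x))"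

definition loewner_le :: "complex^'n^'n \<Rightarrow> complex^'n^'n \<Rightarrow> bool" where
  "loewner_le X Y \<longleftrightarrow> hermitian X \<and> hermitian Y \<and> (\<forall>x. 0 \<le> Re (qform (Y - X) x))"

definition accretive :: "complex^'n^'n \<Rightarrow> bool" where
  "accretive A \<longleftrightarrow> pos_def (re_part A)"

definition num_range :: "complex^'n^'n \<Rightarrow> complex set" where
  "num_range A = {qform A x | x. norm x = 1}"

definition sector :: "real \<Rightarrow> complex set" where
  "sector \<alpha> = {z. 0 < Re z \<and> \<bar>Im z\<bar> \<le> tan \<alpha> * Re z}"

definition hmean :: "real \<Rightarrow> complex^'n^'n \<Rightarrow> complex^'n^'n \<Rightarrow> complex^'n^'n" where
  "hmean t A B = matrix_inv ((1 - t) *\<^sub>R matrix_inv A + t *\<^sub>R matrix_inv B)"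

text \<open>A sigma_f B, given the representing probability measure \<nu> of f\<close>
definition sigma_mean :: "real measure \<Rightarrow> complex^'n^'n \<Rightarrow> complex^'n^'n \<Rightarrow> complex^'n^'n" where
  "sigma_mean \<nu> A B = (\<integral>t. hmean t A B \<partial>\<nu>)"

text \<open>k x k complex matrices as functions nat => nat => complex (entries outside k irrelevant)\<close>
definition mmul :: "nat \<Rightarrow> (nat \<Rightarrow> nat \<Rightarrow> complex) \<Rightarrow> (nat \<Rightarrow> nat \<Rightarrow> complex) \<Rightarrow> nat \<Rightarrow> nat \<Rightarrow> complex" where
  "mmul k X Y = (\<lambda>i j. \<Sum>l<k. X i l * Y l j)"

definition madj :: "(nat \<Rightarrow> nat \<Rightarrow> complex) \<Rightarrow> nat \<Rightarrow> nat \<Rightarrow> complex" where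
  "madj X = (\<lambda>i j. cnj (X j i))"

definition munitary :: "nat \<Rightarrow> (nat \<Rightarrow> nat \<Rightarrow> complex) \<Rightarrow> bool" where
  "munitary k U \<longleftrightarrow> (\<forall>i<k. \<forall>j<k. mmul k (madj U) U i j = (if i = j then 1 else 0))"

definition mdiag :: "(nat \<Rightarrow> real) \<Rightarrow> nat \<Rightarrow> nat \<Rightarrow> complex" where
  "mdiag d = (\<lambda>i j. if i = j then complex_of_real (d i) else 0)"

text \<open>U diag(d) U^*, i.e. the Hermitian matrix with eigenvalues d and eigenvectors columns of U;
  applying f to it (functional calculus) gives U diag(f o d) U^*\<close>
definition spec :: "nat \<Rightarrow> (nat \<Rightarrow> nat \<Rightarrow> complex) \<Rightarrow> (nat \<Rightarrow> real) \<Rightarrow> nat \<Rightarrow> nat \<Rightarrow> complex" where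
  "spec k U d = mmul k (mmul k U (mdiag d)) (madj U)"

definition mloewner :: "nat \<Rightarrow> (nat \<Rightarrow> nat \<Rightarrow> complex) \<Rightarrow> (nat \<Rightarrow> nat \<Rightarrow> complex) \<Rightarrow> bool" where
  "mloewner k X Y \<longleftrightarrow>
     (\<forall>i<k. \<forall>j<k. X i j = cnj (X j i) \<and> Y i j = cnj (Y j i)) \<and>
     (\<forall>x. 0 \<le> Re (\<Sum>i<k. \<Sum>j<k. cnj (x i) * (Y i j - X i j) * x j))"

definition matrix_monotone :: "(real \<Rightarrow> real) \<Rightarrow> bool" where
  "matrix_monotone f \<longleftrightarrow>
     (\<forall>k U V a b. munitary k U \<longrightarrow> munitary k V \<longrightarrow> (\<forall>i<k. 0 < a i \<and> 0 < b i) \<longrightarrow>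
        mloewner k (spec k U a) (spec k V b) \<longrightarrow> mloewner k (spec k U (f \<circ> a)) (spec k V (f \<circ> b)))"

definition class_m :: "(real \<Rightarrow> real) set" where
  "class_m = {f. matrix_monotone f \<and> (\<forall>x>0. 0 < f x) \<and> f 1 = 1}"

definition represents :: "real measure \<Rightarrow> (real \<Rightarrow> real) \<Rightarrow> bool" where
  "represents \<nu> f \<longleftrightarrow> prob_space \<nu> \<and> sets \<nu> = sets (restrict_space borel {0..1}) \<and>
     space \<nu> = {0..1} \<and>
     (\<forall>x>0. f x = (\<integral>t. 1 / ((1 - t) + t / x) \<partial>\<nu>))"

end

theory Submission
  imports Defs
begin

text \<open>
  Writing \<open>x = (1 - t) a + t b\<close> with \<open>A a = B b = (A !\<^sub>t B) x\<close>, and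
  likewise \<open>x = (1 - t) c + t d\<close> for \<open>C !\<^sub>t D\<close>, and pairing \<open>(A !\<^sub>t B) x\<close> with both splittings
  of \<open>x\<close> gives
  \<open>Re \<langle>x, (A !\<^sub>t B) x\<rangle> = (1 - t) (2 Re \<langle>c, A a\<rangle> - Re \<langle>a, A a\<rangle>) + t (2 Re \<langle>d, B b\<rangle> - Re \<langle>b, B b\<rangle>)\<close>.
  If \<open>W(A) \<subseteq> S\<^sub>\<alpha>\<close>, the sector condition applied to the vectors \<open>tan \<alpha> c \<plusminus> i (a - c)\<close> yields
  \<open>2 Re \<langle>c, A a\<rangle> - Re \<langle>a, A a\<rangle> \<le> sec\<^sup>2 \<alpha> Re \<langle>c, A c\<rangle> \<le> sec\<^sup>2 \<alpha> Re \<langle>c, C c\<rangle>\<close>.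
  Hence \<open>Re (A !\<^sub>t B) \<le> sec\<^sup>2 \<alpha> Re (C !\<^sub>t D)\<close> for every \<open>t\<close>, and integrating against \<open>\<nu>\<^sub>f\<close>
  gives the theorem.
\<close>

definition hinner :: "complex^'n \<Rightarrow> complex^'n \<Rightarrow> complex" where
  "hinner u v = (\<Sum>i\<in>UNIV. cnj (u $ i) * v $ i)"

lemma qform_eq_hinner: "qform M x = hinner x (M *v x)"
  by (simp add: qform_def hinner_def)

lemma hinner_commute: "hinner u v = cnj (hinner v u)"
  by (simp add: hinner_def mult.commute)

lemma hinner_add_left: "hinner (u + v) w = hinner u w + hinner v w"
  by (simp add: hinner_def distrib_right sum.distrib)

lemma hinner_add_right: "hinner u (v + w) = hinner u v + hinner u w"
  by (simp add: hinner_def distrib_left sum.distrib)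

lemma hinner_scaleR_left: "hinner (r *\<^sub>R u) w = of_real r * hinner u w"
  by (simp add: hinner_def sum_distrib_left scaleR_conv_of_real[where 'a=complex] mult_ac)

lemma hinner_scaleR_right: "hinner u (r *\<^sub>R w) = of_real r * hinner u w"
  by (simp add: hinner_def sum_distrib_left scaleR_conv_of_real[where 'a=complex] mult_ac)

lemma hinner_smult_left: "hinner (c *s u) w = cnj c * hinner u w"
  by (simp add: hinner_def sum_distrib_left mult_ac)

lemma hinner_smult_right: "hinner u (c *s w) = c * hinner u w"
  by (simp add: hinner_def sum_distrib_left mult_ac)

lemma matrix_vector_mult_scaleR_complex:
  "(M::complex^'n^'m) *v (r *\<^sub>R u) = r *\<^sub>R (M *v u)"
  by (simp add: vec_eq_iff matrix_vector_mult_def sum_distrib_left scaleR_conv_of_real[where 'a=complex] mult_ac)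

lemma scaleR_matrix_vector_mult_complex:
  "(r *\<^sub>R (M::complex^'n^'m)) *v u = r *\<^sub>R (M *v u)"
  by (simp add: vec_eq_iff matrix_vector_mult_def sum_distrib_left scaleR_conv_of_real[where 'a=complex] mult_ac)

lemma qform_add: "qform (M + N) x = qform M x + qform N x"
  by (simp add: qform_eq_hinner matrix_vector_mult_add_rdistrib hinner_add_right)

lemma qform_diff: "qform (M - N) x = qform M x - qform N x"
  by (simp add: qform_def matrix_vector_mult_diff_rdistrib right_diff_distrib sum_subtractf)

lemma qform_scaleR: "qform (r *\<^sub>R M) x = of_real r * qform M x"
  by (simp add: qform_eq_hinner scaleR_matrix_vector_mult_complex hinner_scaleR_right)

lemma qform_scaleR_vector: "qform M (r *\<^sub>R x) = of_real (r\<^sup>2) * qform M x"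
  by (simp add: qform_eq_hinner matrix_vector_mult_scaleR_complex hinner_scaleR_left
      hinner_scaleR_right power2_eq_square)

lemma qform_zero_vector [simp]: "qform M 0 = 0"
  by (simp add: qform_def)

lemma qform_adj: "qform (adj M) x = cnj (qform M x)"
proof -
  have "qform (adj M) x = (\<Sum>i\<in>UNIV. \<Sum>j\<in>UNIV. cnj (x $ i) * cnj (M $ j $ i) * x $ j)"
    by (simp add: qform_def adj_def matrix_vector_mult_def sum_distrib_left mult_ac)
  also have "\<dots> = (\<Sum>j\<in>UNIV. \<Sum>i\<in>UNIV. cnj (x $ i) * cnj (M $ j $ i) * x $ j)"
    by (rule sum.swap)
  also have "\<dots> = cnj (qform M x)"
    by (simp add: qform_def matrix_vector_mult_def sum_distrib_left mult_ac)
  finally show ?thesis .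
qed

lemma Re_qform_re_part: "Re (qform (re_part M) x) = Re (qform M x)"
  by (simp add: re_part_def qform_scaleR qform_add qform_adj)

lemma hermitian_re_part: "hermitian (re_part M)"
  by (simp add: hermitian_def re_part_def adj_def vec_eq_iff scaleR_conv_of_real[where 'a=complex] add.commute)

lemma hermitian_scaleR: "hermitian M \<Longrightarrow> hermitian (r *\<^sub>R M)"
  by (simp add: hermitian_def adj_def vec_eq_iff scaleR_conv_of_real[where 'a=complex])

lemma loewner_le_re_part_iff:
  "loewner_le (re_part M) (re_part N) \<longleftrightarrow> (\<forall>x. Re (qform M x) \<le> Re (qform N x))"
  by (simp add: loewner_le_def hermitian_re_part qform_diff Re_qform_re_part)

lemma accretive_iff: "accretive M \<longleftrightarrow> (\<forall>x. x \<noteq> 0 \<longrightarrow> 0 < Re (qform M x))"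
  by (simp add: accretive_def pos_def_def hermitian_re_part Re_qform_re_part)

lemma accretive_Re_qform_nonneg: "accretive M \<Longrightarrow> 0 \<le> Re (qform M x)"
  by (cases "x = 0") (auto simp: accretive_iff less_imp_le)

lemma matrix_inv_right:
  fixes M :: "'a::field^'n^'n"
  assumes "invertible M"
  shows "M ** matrix_inv M = mat 1"
  using someI_ex[of "\<lambda>N. M ** N = mat 1 \<and> N ** M = mat 1"] assms
  unfolding invertible_def matrix_inv_def by blast

lemma matrix_vector_mult_matrix_inv_cancel:
  fixes M :: "'a::field^'n^'n"
  assumes "invertible M"
  shows "M *v (matrix_inv M *v y) = y"
  by (simp add: matrix_vector_mul_assoc matrix_inv_right[OF assms])

lemma accretive_imp_invertible:
  fixes M :: "complex^'n^'n"
  assumes "accretive M"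
  shows "invertible M"
proof -
  have "\<forall>x. M *v x = 0 \<longrightarrow> x = 0"
    using assms by (auto simp: accretive_iff qform_def)
  then show ?thesis
    using matrix_left_invertible_ker invertible_left_inverse by blast
qed

lemma accretive_matrix_inv:
  fixes M :: "complex^'n^'n"
  assumes "accretive M"
  shows "accretive (matrix_inv M)"
  unfolding accretive_iff
proof (intro allI impI)
  fix v :: "complex^'n" assume "v \<noteq> 0"
  define p where "p = matrix_inv M *v v"
  have Mp: "M *v p = v"
    unfolding p_def by (rule matrix_vector_mult_matrix_inv_cancel[OF accretive_imp_invertible[OF assms]])
  with \<open>v \<noteq> 0\<close> have "p \<noteq> 0"
    by auto
  then have "0 < Re (qform M p)"
    using assms by (simp add: accretive_iff)
  moreover have "qform (matrix_inv M) v = hinner (M *v p) p"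
    by (simp add: qform_eq_hinner Mp flip: p_def)
  then have "qform (matrix_inv M) v = cnj (qform M p)"
    by (simp add: qform_eq_hinner hinner_commute[of "M *v p"])
  ultimately show "0 < Re (qform (matrix_inv M) v)"
    by simp
qed

lemma accretive_convex_combination:
  fixes M N :: "complex^'n^'n"
  assumes "accretive M" "accretive N" "0 \<le> t" "t \<le> 1"
  shows "accretive ((1 - t) *\<^sub>R M + t *\<^sub>R N)"
  unfolding accretive_iff
proof (intro allI impI)
  fix x :: "complex^'n" assume "x \<noteq> 0"
  then have "0 < Re (qform M x)" "0 < Re (qform N x)"
    using assms by (auto simp: accretive_iff)
  then have "0 < (1 - t) * Re (qform M x) + t * Re (qform N x)"
    using assms(3,4) by (cases "t = 1") (auto intro: add_pos_nonneg)
  then show "0 < Re (qform ((1 - t) *\<^sub>R M + t *\<^sub>R N) x)"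
    by (simp add: qform_add qform_scaleR)
qed

definition sectorial :: "real \<Rightarrow> complex^'n^'n \<Rightarrow> bool" where
  "sectorial \<tau> M \<longleftrightarrow> (\<forall>z. \<bar>Im (qform M z)\<bar> \<le> \<tau> * Re (qform M z))"

lemma num_range_subset_sector_imp_sectorial:
  assumes "num_range M \<subseteq> sector \<alpha>"
  shows "sectorial (tan \<alpha>) M"
  unfolding sectorial_def
proof
  fix z
  show "\<bar>Im (qform M z)\<bar> \<le> tan \<alpha> * Re (qform M z)"
  proof (cases "z = 0")
    case False
    define k where "k = 1 / norm z"
    have "norm (k *\<^sub>R z) = 1"
      using False by (simp add: k_def)
    then have "qform M (k *\<^sub>R z) \<in> sector \<alpha>"
      using assms unfolding num_range_def by blast
    then have "k\<^sup>2 * \<bar>Im (qform M z)\<bar> \<le> k\<^sup>2 * (tan \<alpha> * Re (qform M z))"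
      by (simp add: sector_def qform_scaleR_vector abs_mult mult_ac)
    moreover have "0 < k"
      using False by (simp add: k_def)
    ultimately show ?thesis
      by simp
  qed simp
qed

lemma qform_linear_combination:
  "qform M (p *s c + q *s u) =
     cnj p * p * qform M c + cnj p * q * hinner c (M *v u)
       + cnj q * p * hinner u (M *v c) + cnj q * q * qform M u"
  by (simp add: qform_eq_hinner matrix_vector_right_distrib vector_scalar_commute
      hinner_add_left hinner_add_right hinner_smult_left hinner_smult_right algebra_simps)

lemma sectorial_cross_term_bound:
  assumes "sectorial \<tau> M"
  shows "p * (Re (hinner c (M *v u)) - Re (hinner u (M *v c)))
           \<le> \<tau> * (p\<^sup>2 * Re (qform M c) + Re (qform M u))"
proof -
  define v_plus where "v_plus = complex_of_real p *s c + \<i> *s u"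
  define v_minus where "v_minus = complex_of_real p *s c + (- \<i>) *s u"
  have "2 * p * (Re (hinner c (M *v u)) - Re (hinner u (M *v c)))
          = Im (qform M v_plus) - Im (qform M v_minus)"
    unfolding v_plus_def v_minus_def qform_linear_combination by (simp add: algebra_simps)
  also have "\<dots> \<le> \<tau> * (Re (qform M v_plus) + Re (qform M v_minus))"
    using assms unfolding sectorial_def
    by (smt (verit, best) abs_le_D1 abs_le_D2 distrib_left)
  also have "\<dots> = 2 * \<tau> * (p\<^sup>2 * Re (qform M c) + Re (qform M u))"
    unfolding v_plus_def v_minus_def qform_linear_combination by (simp add: power2_eq_square algebra_simps)
  finally show ?thesis
    by simp
qed

lemma sectorial_variational_bound:
  assumes "sectorial \<tau> M" "0 \<le> \<tau>" "accretive M"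
  shows "2 * Re (hinner c (M *v a)) - Re (qform M a) \<le> (1 + \<tau>\<^sup>2) * Re (qform M c)"
proof -
  define u where "u = a - c"
  define D where "D = Re (hinner c (M *v u)) - Re (hinner u (M *v c))"
  have "D \<le> \<tau>\<^sup>2 * Re (qform M c) + Re (qform M u)"
  proof (cases "\<tau> = 0")
    case True
    then show ?thesis
      using sectorial_cross_term_bound[OF assms(1), of 1 c u] accretive_Re_qform_nonneg[OF assms(3), of u]
      by (simp add: D_def)
  next
    case False
    then have "0 < \<tau>"
      using assms(2) by simp
    moreover have "\<tau> * D \<le> \<tau> * (\<tau>\<^sup>2 * Re (qform M c) + Re (qform M u))"
      using sectorial_cross_term_bound[OF assms(1), of \<tau> c u] by (simp add: D_def)
    ultimately show ?thesis
      by simp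
  qed
  moreover have "a = c + u"
    by (simp add: u_def)
  ultimately show ?thesis
    by (simp add: D_def qform_eq_hinner matrix_vector_right_distrib hinner_add_left
        hinner_add_right algebra_simps)
qed

lemma hmean_decomposition:
  fixes M N :: "complex^'n^'n"
  assumes "accretive M" "accretive N" "0 \<le> t" "t \<le> 1"
  obtains a b where "M *v a = hmean t M N *v x" "N *v b = hmean t M N *v x"
    "x = (1 - t) *\<^sub>R a + t *\<^sub>R b"
proof -
  define Y where "Y = (1 - t) *\<^sub>R matrix_inv M + t *\<^sub>R matrix_inv N"
  define y where "y = hmean t M N *v x"
  have "invertible Y"
    unfolding Y_def
    by (intro accretive_imp_invertible accretive_convex_combination accretive_matrix_inv assms)
  then have "x = Y *v y"
    by (simp add: y_def hmean_def Y_def matrix_vector_mult_matrix_inv_cancel)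
  then have "x = (1 - t) *\<^sub>R (matrix_inv M *v y) + t *\<^sub>R (matrix_inv N *v y)"
    by (simp add: Y_def matrix_vector_mult_add_rdistrib scaleR_matrix_vector_mult_complex)
  moreover have "M *v (matrix_inv M *v y) = y" "N *v (matrix_inv N *v y) = y"
    using assms(1,2) by (simp_all add: accretive_imp_invertible matrix_vector_mult_matrix_inv_cancel)
  ultimately show ?thesis
    using that unfolding y_def by blast
qed

lemma Re_qform_eq_split:
  assumes "M *v a = X *v x" "N *v b = X *v x" "x = (1 - t) *\<^sub>R c + t *\<^sub>R d"
  shows "Re (qform X x) = (1 - t) * Re (hinner c (M *v a)) + t * Re (hinner d (N *v b))"
  using assms by (simp add: qform_eq_hinner hinner_add_left hinner_scaleR_left)

lemma Re_qform_hmean_le: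
  fixes A B C D :: "complex^'n^'n"
  assumes "accretive A" "accretive B" "accretive C" "accretive D"
    and "sectorial \<tau> A" "sectorial \<tau> B" "0 \<le> \<tau>"
    and AC: "\<And>z. Re (qform A z) \<le> Re (qform C z)"
    and BD: "\<And>z. Re (qform B z) \<le> Re (qform D z)"
    and t: "0 \<le> t" "t \<le> 1"
  shows "Re (qform (hmean t A B) x) \<le> (1 + \<tau>\<^sup>2) * Re (qform (hmean t C D) x)"
proof -
  obtain a b where ab: "A *v a = hmean t A B *v x" "B *v b = hmean t A B *v x"
      "x = (1 - t) *\<^sub>R a + t *\<^sub>R b"
    using hmean_decomposition[OF assms(1,2) t] .
  obtain c d where cd: "C *v c = hmean t C D *v x" "D *v d = hmean t C D *v x"
      "x = (1 - t) *\<^sub>R c + t *\<^sub>R d"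
    using hmean_decomposition[OF assms(3,4) t] .
  have bound: "2 * Re (hinner c (M *v a)) - Re (qform M a) \<le> (1 + \<tau>\<^sup>2) * Re (qform N c)"
    if "accretive M" "sectorial \<tau> M" "\<And>z. Re (qform M z) \<le> Re (qform N z)"
    for M N :: "complex^'n^'n" and a c
    using sectorial_variational_bound[OF that(2) \<open>0 \<le> \<tau>\<close> that(1), of c a]
      mult_left_mono[OF that(3)[of c], of "1 + \<tau>\<^sup>2"]
    by simp
  have "Re (qform (hmean t A B) x)
      = (1 - t) * (2 * Re (hinner c (A *v a)) - Re (qform A a))
        + t * (2 * Re (hinner d (B *v b)) - Re (qform B b))"
    using Re_qform_eq_split[OF ab] Re_qform_eq_split[OF ab(1,2) cd(3)]
    by (simp add: qform_eq_hinner algebra_simps)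
  also have "\<dots> \<le> (1 - t) * ((1 + \<tau>\<^sup>2) * Re (qform C c)) + t * ((1 + \<tau>\<^sup>2) * Re (qform D d))"
    using bound[OF assms(1,5) AC] bound[OF assms(2,6) BD] t
    by (intro add_mono mult_left_mono) auto
  also have "\<dots> = (1 + \<tau>\<^sup>2) * ((1 - t) * Re (qform C c) + t * Re (qform D d))"
    by (simp add: algebra_simps)
  also have "\<dots> = (1 + \<tau>\<^sup>2) * Re (qform (hmean t C D) x)"
    using Re_qform_eq_split[OF cd] by (simp add: qform_eq_hinner)
  finally show ?thesis .
qed

lemma matrix_inv_cramer:
  fixes M :: "'a::field^'n^'n"
  assumes "invertible M"
  shows "matrix_inv M = (\<chi> i j. det (\<chi> r s. if s = i then axis j 1 $ r else M $ r $ s) / det M)"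
proof -
  have "matrix_inv M $ i $ j = det (\<chi> r s. if s = i then axis j 1 $ r else M $ r $ s) / det M" for i j
  proof -
    have "matrix_inv M *v axis j 1 = (\<chi> k. det (\<chi> r s. if s = k then axis j 1 $ r else M $ r $ s) / det M)"
      using cramer[OF invertible_det_nz[THEN iffD1, OF assms]]
        matrix_vector_mult_matrix_inv_cancel[OF assms] by blast
    moreover have "(matrix_inv M *v axis j 1) $ i = matrix_inv M $ i $ j"
      by (simp add: matrix_vector_mult_def axis_def if_distrib cong: if_cong)
    ultimately show ?thesis
      by simp
  qed
  then show ?thesis
    by (simp add: vec_eq_iff)
qed

lemma continuous_on_det:
  fixes F :: "'a::topological_space \<Rightarrow> 'b::real_normed_field^'n^'n"
  assumes "continuous_on S F"
  shows "continuous_on S (\<lambda>t. det (F t))"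
  unfolding det_def
  by (intro continuous_intros assms)

lemma continuous_on_matrix_inv:
  fixes F :: "'a::topological_space \<Rightarrow> 'b::real_normed_field^'n^'n"
  assumes "continuous_on S F" "\<And>t. t \<in> S \<Longrightarrow> invertible (F t)"
  shows "continuous_on S (\<lambda>t. matrix_inv (F t))"
proof (rule continuous_on_eq)
  have "continuous_on S (\<lambda>t. if s = i then axis j 1 $ r else F t $ r $ s)" for i j r s
    by (cases "s = i") (simp_all add: continuous_on_component assms(1))
  then show "continuous_on S
      (\<lambda>t. \<chi> i j. det (\<chi> r s. if s = i then axis j 1 $ r else F t $ r $ s) / det (F t))"
    using assms by (intro continuous_intros continuous_on_det) (auto simp: invertible_det_nz)
qed (simp add: matrix_inv_cramer assms(2))

lemma hmean_continuous_on:
  fixes M N :: "complex^'n^'n"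
  assumes "accretive M" "accretive N"
  shows "continuous_on {0..1} (\<lambda>t. hmean t M N)"
  unfolding hmean_def
proof (rule continuous_on_matrix_inv)
  show "continuous_on {0..1} (\<lambda>t. (1 - t) *\<^sub>R matrix_inv M + t *\<^sub>R matrix_inv N)"
    by (intro continuous_intros)
  show "invertible ((1 - t) *\<^sub>R matrix_inv M + t *\<^sub>R matrix_inv N)" if "t \<in> {0..1}" for t
    using that assms
    by (intro accretive_imp_invertible accretive_convex_combination accretive_matrix_inv) auto
qed

lemma integrable_hmean:
  fixes M N :: "complex^'n^'n"
  assumes "accretive M" "accretive N"
    and "finite_measure \<nu>" "sets \<nu> = sets (restrict_space borel {0..1})"
  shows "integrable \<nu> (\<lambda>t. hmean t M N)"
proof -
  have cont: "continuous_on {0..1} (\<lambda>t. hmean t M N)"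
    using hmean_continuous_on[OF assms(1,2)] .
  have space: "space \<nu> = {0..1}"
    using sets_eq_imp_space_eq[OF assms(4)] by simp
  have "(\<lambda>t. hmean t M N) \<in> borel_measurable \<nu>"
    using borel_measurable_continuous_on_restrict[OF cont] measurable_cong_sets[OF assms(4) refl]
    by metis
  moreover obtain K where "\<forall>t\<in>{0..1}. norm (hmean t M N) \<le> K"
    using compact_imp_bounded[OF compact_continuous_image[OF cont compact_Icc]]
    unfolding bounded_iff by blast
  ultimately show ?thesis
    using space by (intro finite_measure.integrable_const_bound[OF assms(3), where B=K]) auto
qed

lemma Re_qform_integral:
  fixes F :: "real \<Rightarrow> complex^'n^'n"
  assumes "integrable \<nu> F"
  shows "Re (qform (\<integral>t. F t \<partial>\<nu>) x) = (\<integral>t. Re (qform (F t) x) \<partial>\<nu>)"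
    and "integrable \<nu> (\<lambda>t. Re (qform (F t) x))"
proof -
  have "linear (\<lambda>M::complex^'n^'n. Re (qform M x))"
    by (rule linearI) (simp_all add: qform_add qform_scaleR)
  then have "bounded_linear (\<lambda>M::complex^'n^'n. Re (qform M x))"
    by (simp add: linear_conv_bounded_linear)
  from integral_bounded_linear[OF this assms] integrable_bounded_linear[OF this assms]
  show "Re (qform (\<integral>t. F t \<partial>\<nu>) x) = (\<integral>t. Re (qform (F t) x) \<partial>\<nu>)"
    and "integrable \<nu> (\<lambda>t. Re (qform (F t) x))"
    by simp_all
qed

lemma Re_qform_integral_mono:
  fixes F G :: "real \<Rightarrow> complex^'n^'n"
  assumes "integrable \<nu> F" "integrable \<nu> G"
    and "\<And>t. t \<in> space \<nu> \<Longrightarrow> Re (qform (F t) x) \<le> k * Re (qform (G t) x)"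
  shows "Re (qform (\<integral>t. F t \<partial>\<nu>) x) \<le> k * Re (qform (\<integral>t. G t \<partial>\<nu>) x)"
proof -
  have "(\<integral>t. Re (qform (F t) x) \<partial>\<nu>) \<le> (\<integral>t. k * Re (qform (G t) x) \<partial>\<nu>)"
    using assms Re_qform_integral(2)[OF assms(1)] Re_qform_integral(2)[OF assms(2)]
    by (intro integral_mono) auto
  then show ?thesis
    by (simp add: Re_qform_integral(1)[OF assms(1)] Re_qform_integral(1)[OF assms(2)])
qed

theorem mainTheorem10:
  fixes A B C D :: "complex^'n^'n" and \<alpha> :: real and f :: "real \<Rightarrow> real" and \<nu> :: "real measure"
  assumes "accretive A" "accretive B" "accretive C" "accretive D"
    and "loewner_le (re_part A) (re_part C)" and "loewner_le (re_part B) (re_part D)"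
    and "0 \<le> \<alpha>" "\<alpha> < pi / 2"
    and "num_range A \<subseteq> sector \<alpha>" "num_range B \<subseteq> sector \<alpha>"
    and "f \<in> class_m" and "represents \<nu> f"
  shows "loewner_le (re_part (sigma_mean \<nu> A B)) ((1 / (cos \<alpha>)\<^sup>2) *\<^sub>R re_part (sigma_mean \<nu> C D))"
proof -
  define \<tau> where "\<tau> = tan \<alpha>"
  have "0 \<le> \<tau>" and sec: "1 / (cos \<alpha>)\<^sup>2 = 1 + \<tau>\<^sup>2"
    using assms(7,8) tan_sec[of \<alpha>] cos_gt_zero_pi[of \<alpha>]
    by (simp_all add: \<tau>_def tan_pos_pi2_le power_one_over inverse_eq_divide)
  have \<nu>: "finite_measure \<nu>" "sets \<nu> = sets (restrict_space borel {0..1})" "space \<nu> = {0..1}"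
    using assms(12) by (auto simp: represents_def prob_space_def)
  have pointwise: "Re (qform (hmean t A B) x) \<le> (1 + \<tau>\<^sup>2) * Re (qform (hmean t C D) x)"
    if "t \<in> space \<nu>" for t x
    using that \<nu>(3) assms(1-6) \<open>0 \<le> \<tau>\<close>
      num_range_subset_sector_imp_sectorial[OF assms(9)] num_range_subset_sector_imp_sectorial[OF assms(10)]
    by (intro Re_qform_hmean_le) (auto simp: \<tau>_def loewner_le_re_part_iff)
  have "Re (qform (sigma_mean \<nu> A B) x) \<le> (1 + \<tau>\<^sup>2) * Re (qform (sigma_mean \<nu> C D) x)" for x
    unfolding sigma_mean_def
    using integrable_hmean[OF assms(1,2) \<nu>(1,2)] integrable_hmean[OF assms(3,4) \<nu>(1,2)] pointwise
    by (rule Re_qform_integral_mono)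
  then show ?thesis
    by (simp add: loewner_le_def hermitian_re_part hermitian_scaleR qform_diff qform_scaleR
        Re_qform_re_part sec)
qed

end
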